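(* Let $X$ be a set and let $A$ and $B$ be Banach algebras of complex-valued functions on $X$ (with pointwise operations), each containing the constant functions on $X$. Let $\psi:A\to B$ be a continuous algebra homomorphism and $\varphi\in\Delta(B)$. Let $F$ be the linear span of the set of all $f\in A$ such that $P(f)=0$ for some nonzero polynomial $P$ in one complex variable. If $F$ is dense in $A$ (in the norm of $A$), then every $(\varphi,\psi)$-point derivation on $A$ is zero, i.e. $\mathfrak{D}_{(\varphi,\psi)}=\{0\}$.
   Context: $\Delta(B)$ denotes the set of all nonzero multiplicative linear functionals on $B$. A bounded linear functional $D$ on $A$ is a $(\varphi,\psi)$-point derivation if $D(ab)=\varphi(\psi(a))\,D(b)+\varphi(\psi(b))\,D(a)$ for all $a,b\in A$; $\mathfrak{D}_{(\varphi,\psi)}$ is the set of all of them. *)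

theory Defs
  imports "HOL-Computational_Algebra.Polynomial" "HOL-Analysis.Analysis"
begin

definition banach_function_algebra ::
  "('x \<Rightarrow> complex) set \<Rightarrow> (('x \<Rightarrow> complex) \<Rightarrow> real) \<Rightarrow> bool" where
  "banach_function_algebra A nA \<longleftrightarrow>
     (\<forall>c. (\<lambda>x. c) \<in> A) \<and>
     (\<forall>f\<in>A. \<forall>g\<in>A. (\<lambda>x. f x + g x) \<in> A) \<and>
     (\<forall>f\<in>A. \<forall>c. (\<lambda>x. c * f x) \<in> A) \<and>
     (\<forall>f\<in>A. \<forall>g\<in>A. (\<lambda>x. f x * g x) \<in> A) \<and>
     (\<forall>f\<in>A. nA f \<ge> 0) \<and>
     (\<forall>f\<in>A. nA f = 0 \<longleftrightarrow> f = (\<lambda>x. 0)) \<and>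
     (\<forall>f\<in>A. \<forall>c. nA (\<lambda>x. c * f x) = cmod c * nA f) \<and>
     (\<forall>f\<in>A. \<forall>g\<in>A. nA (\<lambda>x. f x + g x) \<le> nA f + nA g) \<and>
     (\<forall>f\<in>A. \<forall>g\<in>A. nA (\<lambda>x. f x * g x) \<le> nA f * nA g) \<and>
     (\<forall>s::nat \<Rightarrow> 'x \<Rightarrow> complex. (\<forall>n. s n \<in> A) \<and>
        (\<forall>e>0. \<exists>N. \<forall>m\<ge>N. \<forall>n\<ge>N. nA (\<lambda>x. s m x - s n x) < e) \<longrightarrow>
        (\<exists>l\<in>A. (\<lambda>n. nA (\<lambda>x. s n x - l x)) \<longlonglongrightarrow> 0))"

definition cont_alg_hom ::
  "('x \<Rightarrow> complex) set \<Rightarrow> (('x \<Rightarrow> complex) \<Rightarrow> real) \<Rightarrow>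
   ('y \<Rightarrow> complex) set \<Rightarrow> (('y \<Rightarrow> complex) \<Rightarrow> real) \<Rightarrow>
   (('x \<Rightarrow> complex) \<Rightarrow> ('y \<Rightarrow> complex)) \<Rightarrow> bool" where
  "cont_alg_hom A nA B nB \<psi> \<longleftrightarrow>
     (\<forall>f\<in>A. \<psi> f \<in> B) \<and>
     (\<forall>f\<in>A. \<forall>g\<in>A. \<psi> (\<lambda>x. f x + g x) = (\<lambda>y. \<psi> f y + \<psi> g y)) \<and>
     (\<forall>f\<in>A. \<forall>c. \<psi> (\<lambda>x. c * f x) = (\<lambda>y. c * \<psi> f y)) \<and>
     (\<forall>f\<in>A. \<forall>g\<in>A. \<psi> (\<lambda>x. f x * g x) = (\<lambda>y. \<psi> f y * \<psi> g y)) \<and>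
     (\<exists>C. \<forall>f\<in>A. nB (\<psi> f) \<le> C * nA f)"

definition lin_functional :: "('x \<Rightarrow> complex) set \<Rightarrow> (('x \<Rightarrow> complex) \<Rightarrow> complex) \<Rightarrow> bool" where
  "lin_functional A L \<longleftrightarrow>
     (\<forall>f\<in>A. \<forall>g\<in>A. L (\<lambda>x. f x + g x) = L f + L g) \<and>
     (\<forall>f\<in>A. \<forall>c. L (\<lambda>x. c * f x) = c * L f)"

definition char_space :: "('x \<Rightarrow> complex) set \<Rightarrow> (('x \<Rightarrow> complex) \<Rightarrow> complex) set" where
  "char_space B = {\<phi>. lin_functional B \<phi> \<and>
     (\<forall>f\<in>B. \<forall>g\<in>B. \<phi> (\<lambda>x. f x * g x) = \<phi> f * \<phi> g) \<and>
     (\<exists>f\<in>B. \<phi> f \<noteq> 0)}"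

definition point_derivations ::
  "('x \<Rightarrow> complex) set \<Rightarrow> (('x \<Rightarrow> complex) \<Rightarrow> real) \<Rightarrow>
   (('y \<Rightarrow> complex) \<Rightarrow> complex) \<Rightarrow> (('x \<Rightarrow> complex) \<Rightarrow> ('y \<Rightarrow> complex)) \<Rightarrow>
   (('x \<Rightarrow> complex) \<Rightarrow> complex) set" where
  "point_derivations A nA \<phi> \<psi> = {D. lin_functional A D \<and>
     (\<exists>C. \<forall>f\<in>A. cmod (D f) \<le> C * nA f) \<and>
     (\<forall>f\<in>A. \<forall>g\<in>A. D (\<lambda>x. f x * g x) = \<phi> (\<psi> f) * D g + \<phi> (\<psi> g) * D f)}"

definition fun_span :: "('x \<Rightarrow> complex) set \<Rightarrow> ('x \<Rightarrow> complex) set" where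
  "fun_span S = {f. \<exists>(n::nat) c g. (\<forall>i<n. g i \<in> S) \<and> f = (\<lambda>x. \<Sum>i<n. c i * g i x)}"

definition algebraic_elements :: "('x \<Rightarrow> complex) set \<Rightarrow> ('x \<Rightarrow> complex) set" where
  "algebraic_elements A = {f \<in> A. \<exists>P :: complex poly. P \<noteq> 0 \<and> (\<forall>x. poly P (f x) = 0)}"

end

theory Submission
  imports Defs
begin

text \<open>The composite \<open>\<theta> = \<phi> \<circ> \<psi>\<close> is a multiplicative linear functional on \<open>A\<close>, and a
  \<open>(\<phi>,\<psi>)\<close>-point derivation is a point derivation at \<open>\<theta>\<close>. Either \<open>\<theta>\<close> vanishes, and then
  \<open>D f = D (f \<cdot> 1) = 0\<close>, or \<open>\<theta> 1 = 1\<close>. In the latter case let \<open>f\<close> be annihilated by a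
  nonzero polynomial with root set \<open>S\<close>, and put \<open>\<lambda> = \<theta> f\<close>. The functions
  \<open>g = f - \<lambda>\<close> and \<open>h = \<Prod>\<close> \<open>(f - r)\<close> over \<open>r \<in> S - {\<lambda>}\<close> have pointwise product \<open>0\<close>, since
  every value of \<open>f\<close> lies in \<open>S\<close>; as \<open>\<theta> g = 0\<close> and \<open>\<theta> h \<noteq> 0\<close>, the derivation rule gives
  \<open>0 = D (g h) = \<theta> h \<cdot> D f\<close>. So \<open>D\<close> vanishes on the algebraic elements, hence on their
  span by linearity, hence on all of \<open>A\<close> by boundedness and density.\<close>

locale function_algebra =
  fixes A :: "('x \<Rightarrow> complex) set"
  assumes const_mem: "(\<lambda>x. c) \<in> A"
    and add_mem: "f \<in> A \<Longrightarrow> g \<in> A \<Longrightarrow> (\<lambda>x. f x + g x) \<in> A"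
    and scale_mem: "f \<in> A \<Longrightarrow> (\<lambda>x. c * f x) \<in> A"
    and mult_mem: "f \<in> A \<Longrightarrow> g \<in> A \<Longrightarrow> (\<lambda>x. f x * g x) \<in> A"

lemma banach_function_algebra_imp_function_algebra:
  "banach_function_algebra A nA \<Longrightarrow> function_algebra A"
  unfolding banach_function_algebra_def by unfold_locales auto

lemma banach_function_algebra_norm_nonneg:
  "banach_function_algebra A nA \<Longrightarrow> f \<in> A \<Longrightarrow> nA f \<ge> 0"
  unfolding banach_function_algebra_def by auto

lemma lin_functional_add:
  "lin_functional A L \<Longrightarrow> f \<in> A \<Longrightarrow> g \<in> A \<Longrightarrow> L (\<lambda>x. f x + g x) = L f + L g"
  unfolding lin_functional_def by blast

lemma lin_functional_scale:
  "lin_functional A L \<Longrightarrow> f \<in> A \<Longrightarrow> L (\<lambda>x. c * f x) = c * L f"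
  unfolding lin_functional_def by blast

text \<open>Unlike in \<^const>\<open>char_space\<close>, the zero functional is admitted: \<open>\<phi> \<circ> \<psi>\<close> vanishes
  when \<open>\<phi>\<close> kills \<open>\<psi> 1\<close>.\<close>

definition multiplicative_functional ::
  "('x \<Rightarrow> complex) set \<Rightarrow> (('x \<Rightarrow> complex) \<Rightarrow> complex) \<Rightarrow> bool" where
  "multiplicative_functional A \<theta> \<longleftrightarrow> lin_functional A \<theta> \<and>
     (\<forall>f\<in>A. \<forall>g\<in>A. \<theta> (\<lambda>x. f x * g x) = \<theta> f * \<theta> g)"

definition point_derivation_at ::
  "('x \<Rightarrow> complex) set \<Rightarrow> (('x \<Rightarrow> complex) \<Rightarrow> complex) \<Rightarrow>
   (('x \<Rightarrow> complex) \<Rightarrow> complex) \<Rightarrow> bool" where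
  "point_derivation_at A \<theta> D \<longleftrightarrow> lin_functional A D \<and>
     (\<forall>f\<in>A. \<forall>g\<in>A. D (\<lambda>x. f x * g x) = \<theta> f * D g + \<theta> g * D f)"

lemma multiplicative_functional_mult:
  "multiplicative_functional A \<theta> \<Longrightarrow> f \<in> A \<Longrightarrow> g \<in> A \<Longrightarrow>
    \<theta> (\<lambda>x. f x * g x) = \<theta> f * \<theta> g"
  unfolding multiplicative_functional_def by blast

lemma multiplicative_functional_lin:
  "multiplicative_functional A \<theta> \<Longrightarrow> lin_functional A \<theta>"
  unfolding multiplicative_functional_def by blast

lemma point_derivation_at_lin:
  "point_derivation_at A \<theta> D \<Longrightarrow> lin_functional A D"
  unfolding point_derivation_at_def by blast

lemma point_derivation_at_mult:
  "point_derivation_at A \<theta> D \<Longrightarrow> f \<in> A \<Longrightarrow> g \<in> A \<Longrightarrow>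
    D (\<lambda>x. f x * g x) = \<theta> f * D g + \<theta> g * D f"
  unfolding point_derivation_at_def by blast

lemma multiplicative_functional_comp_hom:
  assumes "cont_alg_hom A nA B nB \<psi>" and "\<phi> \<in> char_space B"
  shows "multiplicative_functional A (\<lambda>f. \<phi> (\<psi> f))"
  using assms
  unfolding multiplicative_functional_def lin_functional_def cont_alg_hom_def char_space_def
  by auto

lemma point_derivations_iff:
  "D \<in> point_derivations A nA \<phi> \<psi> \<longleftrightarrow>
     point_derivation_at A (\<lambda>f. \<phi> (\<psi> f)) D \<and> (\<exists>C. \<forall>f\<in>A. cmod (D f) \<le> C * nA f)"
  unfolding point_derivations_def point_derivation_at_def by auto

context function_algebra
begin

lemma diff_mem: "f \<in> A \<Longrightarrow> g \<in> A \<Longrightarrow> (\<lambda>x. f x - g x) \<in> A"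
  using add_mem[of f "\<lambda>x. - 1 * g x"] scale_mem[of g "- 1"] by simp

lemma lin_functional_diff:
  assumes "lin_functional A L" "f \<in> A" "g \<in> A"
  shows "L (\<lambda>x. f x - g x) = L f - L g"
proof -
  have "L (\<lambda>x. f x - g x) = L (\<lambda>x. f x + - 1 * g x)"
    by simp
  also have "\<dots> = L f + - 1 * L g"
    using lin_functional_add[OF assms(1,2) scale_mem[OF assms(3)]] lin_functional_scale[OF assms(1,3)]
    by (simp only:)
  finally show ?thesis
    by simp
qed

lemma lin_functional_const:
  "lin_functional A L \<Longrightarrow> L (\<lambda>x. c) = c * L (\<lambda>x. 1)"
  using lin_functional_scale[OF _ const_mem[of 1], of L c] by simp

lemma multiplicative_functional_one_cases:
  assumes "multiplicative_functional A \<theta>"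
  shows "\<theta> (\<lambda>x. 1) = 0 \<or> \<theta> (\<lambda>x. 1) = 1"
proof -
  have "\<theta> (\<lambda>x. 1 * 1) = \<theta> (\<lambda>x. 1) * \<theta> (\<lambda>x. 1)"
    using multiplicative_functional_mult[OF assms const_mem const_mem] .
  then have "\<theta> (\<lambda>x. 1) * (\<theta> (\<lambda>x. 1) - 1) = 0"
    by (simp add: algebra_simps)
  then show ?thesis
    by simp
qed

lemma multiplicative_functional_const:
  assumes "multiplicative_functional A \<theta>" "\<theta> (\<lambda>x. 1) = 1"
  shows "\<theta> (\<lambda>x. c) = c"
  using lin_functional_const[OF multiplicative_functional_lin[OF assms(1)], of c] assms(2) by simp

lemma multiplicative_functional_vanishes:
  assumes "multiplicative_functional A \<theta>" "\<theta> (\<lambda>x. 1) = 0" "f \<in> A"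
  shows "\<theta> f = 0"
proof -
  have "\<theta> (\<lambda>x. f x * 1) = \<theta> f * \<theta> (\<lambda>x. 1)"
    using multiplicative_functional_mult[OF assms(1,3) const_mem] .
  then show ?thesis
    using assms(2) by simp
qed

lemma prod_shift_mem:
  "finite T \<Longrightarrow> f \<in> A \<Longrightarrow> (\<lambda>x. \<Prod>r\<in>T. f x - r) \<in> A"
  by (induction T rule: finite_induct) (simp_all add: const_mem mult_mem diff_mem)

lemma multiplicative_functional_prod_shift:
  assumes \<theta>: "multiplicative_functional A \<theta>" "\<theta> (\<lambda>x. 1) = 1"
    and f: "f \<in> A"
  shows "finite T \<Longrightarrow> \<theta> (\<lambda>x. \<Prod>r\<in>T. f x - r) = (\<Prod>r\<in>T. \<theta> f - r)"
proof (induction T rule: finite_induct)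
  case empty
  then show ?case using \<theta> by simp
next
  case (insert r T)
  have "\<theta> (\<lambda>x. f x - r) = \<theta> f - r"
    using lin_functional_diff[OF multiplicative_functional_lin[OF \<theta>(1)] f const_mem]
      multiplicative_functional_const[OF \<theta>] by simp
  then show ?case
    using insert multiplicative_functional_mult[OF \<theta>(1) diff_mem[OF f const_mem]
        prod_shift_mem[OF insert(1) f]]
    by simp
qed

lemma point_derivation_at_vanishes_if_one_zero:
  assumes "multiplicative_functional A \<theta>" "\<theta> (\<lambda>x. 1) = 0"
    and "point_derivation_at A \<theta> D" "f \<in> A"
  shows "D f = 0"
proof -
  have "D (\<lambda>x. f x * 1) = \<theta> f * D (\<lambda>x. 1) + \<theta> (\<lambda>x. 1) * D f"
    using point_derivation_at_mult[OF assms(3,4) const_mem] .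
  then show ?thesis
    using multiplicative_functional_vanishes[OF assms(1,2,4)] assms(2) by simp
qed

lemma point_derivation_at_const:
  assumes "\<theta> (\<lambda>x. 1) = 1" "point_derivation_at A \<theta> D"
  shows "D (\<lambda>x. c) = 0"
proof -
  have "D (\<lambda>x. 1 * 1) = \<theta> (\<lambda>x. 1) * D (\<lambda>x. 1) + \<theta> (\<lambda>x. 1) * D (\<lambda>x. 1)"
    using point_derivation_at_mult[OF assms(2) const_mem const_mem] .
  then have "D (\<lambda>x. 1) = 0"
    using assms(1) by simp
  then show ?thesis
    using lin_functional_const[OF point_derivation_at_lin[OF assms(2)], of c] by simp
qed

lemma point_derivation_at_algebraic_elements:
  assumes \<theta>: "multiplicative_functional A \<theta>" and D: "point_derivation_at A \<theta> D"
    and "f \<in> algebraic_elements A"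
  shows "D f = 0"
proof (cases "\<theta> (\<lambda>x. 1) = 0")
  case True
  then show ?thesis
    using point_derivation_at_vanishes_if_one_zero[OF \<theta> True D] assms(3)
    unfolding algebraic_elements_def by simp
next
  case False
  then have \<theta>1: "\<theta> (\<lambda>x. 1) = 1"
    using multiplicative_functional_one_cases[OF \<theta>] by simp
  obtain P :: "complex poly" where f: "f \<in> A" and "P \<noteq> 0" and root: "\<And>x. poly P (f x) = 0"
    using assms(3) unfolding algebraic_elements_def by auto
  define S where "S = {z. poly P z = 0} - {\<theta> f}"
  have S: "finite S"
    unfolding S_def using poly_roots_finite[OF \<open>P \<noteq> 0\<close>] by simp
  define g where "g = (\<lambda>x. f x - \<theta> f)"
  define h where "h = (\<lambda>x. \<Prod>r\<in>S. f x - r)"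
  note lin_D = point_derivation_at_lin[OF D] and lin_\<theta> = multiplicative_functional_lin[OF \<theta>]
  have g: "g \<in> A" "\<theta> g = 0" "D g = D f"
    unfolding g_def
    using diff_mem[OF f const_mem] lin_functional_diff[OF lin_\<theta> f const_mem]
      lin_functional_diff[OF lin_D f const_mem] multiplicative_functional_const[OF \<theta> \<theta>1]
      point_derivation_at_const[OF \<theta>1 D]
    by simp_all
  have h: "h \<in> A" "\<theta> h \<noteq> 0"
    unfolding h_def
    using prod_shift_mem[OF S f] multiplicative_functional_prod_shift[OF \<theta> \<theta>1 f S] S
    by (simp_all add: S_def)
  have gh: "(\<lambda>x. g x * h x) = (\<lambda>x. 0)"
  proof
    fix x
    show "g x * h x = 0"
    proof (cases "f x = \<theta> f")
      case True
      then show ?thesis unfolding g_def by simp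
    next
      case False
      then have "f x \<in> S"
        using root unfolding S_def by simp
      then show ?thesis
        unfolding h_def using S by (simp add: prod_zero_iff)
    qed
  qed
  have "D (\<lambda>x. 0) = 0"
    using lin_functional_const[OF lin_D, of 0] by simp
  moreover have "D (\<lambda>x. g x * h x) = \<theta> g * D h + \<theta> h * D g"
    using point_derivation_at_mult[OF D g(1) h(1)] .
  ultimately have "\<theta> h * D f = 0"
    using gh g by simp
  then show ?thesis
    using h(2) by simp
qed

lemma lin_functional_vanishes_on_span:
  assumes L: "lin_functional A L" and S: "S \<subseteq> A" "\<And>g. g \<in> S \<Longrightarrow> L g = 0"
    and "f \<in> fun_span S"
  shows "f \<in> A \<and> L f = 0"
proof -
  have "(\<lambda>x. \<Sum>i<n. c i * g i x) \<in> A \<and> L (\<lambda>x. \<Sum>i<n. c i * g i x) = 0"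
    if "\<forall>i<n. g i \<in> S" for n :: nat and c g
    using that
  proof (induction n)
    case 0
    then show ?case
      using lin_functional_const[OF L, of 0] const_mem by simp
  next
    case (Suc n)
    then have gn: "g n \<in> A" "L (g n) = 0"
      using S by auto
    then have "(\<lambda>x. c n * g n x) \<in> A" "L (\<lambda>x. c n * g n x) = 0"
      using scale_mem lin_functional_scale[OF L] by simp_all
    then show ?case
      using Suc add_mem lin_functional_add[OF L] by simp
  qed
  then show ?thesis
    using assms(4) unfolding fun_span_def by blast
qed

lemma vanishing_functionals_subset_point_derivations:
  "{D. \<forall>f\<in>A. D f = 0} \<subseteq> point_derivations A nA \<phi> \<psi>"
proof
  fix D :: "('x \<Rightarrow> complex) \<Rightarrow> complex"
  assume "D \<in> {D. \<forall>f\<in>A. D f = 0}"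
  then show "D \<in> point_derivations A nA \<phi> \<psi>"
    unfolding point_derivations_def lin_functional_def
    by (simp add: add_mem scale_mem mult_mem) (rule exI[of _ 0], simp)
qed

lemma bounded_lin_functional_vanishes_on_dense:
  assumes L: "lin_functional A L" and bound: "\<And>f. f \<in> A \<Longrightarrow> cmod (L f) \<le> C * nA f"
    and nonneg: "\<And>f. f \<in> A \<Longrightarrow> nA f \<ge> 0"
    and S: "S \<subseteq> A" "\<And>g. g \<in> S \<Longrightarrow> L g = 0"
    and dense: "\<forall>f\<in>A. \<forall>e>0. \<exists>g\<in>S. nA (\<lambda>x. f x - g x) < e"
    and f: "f \<in> A"
  shows "L f = 0"
proof -
  define C' where "C' = max C 1"
  have "C' > 0"
    unfolding C'_def by simp
  have small: "cmod (L f) \<le> e" if "e > 0" for e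
  proof -
    obtain g where "g \<in> S" and close: "nA (\<lambda>x. f x - g x) < e / C'"
      using dense f \<open>e > 0\<close> \<open>C' > 0\<close> by (meson divide_pos_pos)
    then have fg: "(\<lambda>x. f x - g x) \<in> A" "L (\<lambda>x. f x - g x) = L f"
      using S f diff_mem lin_functional_diff[OF L] by auto
    have "cmod (L f) \<le> C * nA (\<lambda>x. f x - g x)"
      using bound[OF fg(1)] fg(2) by simp
    also have "\<dots> \<le> C' * nA (\<lambda>x. f x - g x)"
      unfolding C'_def using nonneg[OF fg(1)] by (simp add: mult_right_mono)
    also have "\<dots> \<le> C' * (e / C')"
      using close \<open>C' > 0\<close> by (intro mult_left_mono) auto
    also have "\<dots> = e"
      using \<open>C' > 0\<close> by simp
    finally show ?thesis .
  qed
  then have "cmod (L f) \<le> 0"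
    by (rule field_le_epsilon) (simp add: small)
  then show ?thesis
    by simp
qed

end

theorem corollary2p6:
  fixes A :: "('x \<Rightarrow> complex) set" and nA :: "('x \<Rightarrow> complex) \<Rightarrow> real"
    and B :: "('x \<Rightarrow> complex) set" and nB :: "('x \<Rightarrow> complex) \<Rightarrow> real"
    and \<psi> :: "('x \<Rightarrow> complex) \<Rightarrow> ('x \<Rightarrow> complex)"
    and \<phi> :: "('x \<Rightarrow> complex) \<Rightarrow> complex"
  assumes "banach_function_algebra A nA"
    and "banach_function_algebra B nB"
    and "cont_alg_hom A nA B nB \<psi>"
    and "\<phi> \<in> char_space B"
    and "\<forall>f\<in>A. \<forall>e>0. \<exists>g\<in>fun_span (algebraic_elements A). nA (\<lambda>x. f x - g x) < e"
  shows "point_derivations A nA \<phi> \<psi> = {D. \<forall>f\<in>A. D f = 0}"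
proof
  interpret function_algebra A
    using assms(1) by (rule banach_function_algebra_imp_function_algebra)
  have \<theta>: "multiplicative_functional A (\<lambda>f. \<phi> (\<psi> f))"
    using assms(3,4) by (rule multiplicative_functional_comp_hom)
  show "point_derivations A nA \<phi> \<psi> \<subseteq> {D. \<forall>f\<in>A. D f = 0}"
  proof
    fix D
    assume "D \<in> point_derivations A nA \<phi> \<psi>"
    then obtain C where D: "point_derivation_at A (\<lambda>f. \<phi> (\<psi> f)) D"
      and bound: "\<And>f. f \<in> A \<Longrightarrow> cmod (D f) \<le> C * nA f"
      unfolding point_derivations_iff by blast
    note lin = point_derivation_at_lin[OF D]
    have "algebraic_elements A \<subseteq> A"
      unfolding algebraic_elements_def by blast
    with lin have span: "fun_span (algebraic_elements A) \<subseteq> A"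
      "\<And>g. g \<in> fun_span (algebraic_elements A) \<Longrightarrow> D g = 0"
      using lin_functional_vanishes_on_span point_derivation_at_algebraic_elements[OF \<theta> D]
      by blast+
    show "D \<in> {D. \<forall>f\<in>A. D f = 0}"
      using bounded_lin_functional_vanishes_on_dense[OF lin bound _ span assms(5)]
        banach_function_algebra_norm_nonneg[OF assms(1)] by blast
  qed
  show "{D. \<forall>f\<in>A. D f = 0} \<subseteq> point_derivations A nA \<phi> \<psi>"
    by (rule vanishing_functionals_subset_point_derivations)
qed

end
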